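(* Consider a tree power network $(\mathcal{V},\mathcal{E})$, $\mathcal{V}=\{1,\dots,n\}$, with fixed voltage magnitudes $|V_i|=\overline{V}_i>0$ and angle limits satisfying $$-\tan^{-1}\!\Big(\frac{b_{ik}}{g_{ik}}\Big)<\underline{\theta}_{ik}\le\overline{\theta}_{ik}<\tan^{-1}\!\Big(\frac{b_{ik}}{g_{ik}}\Big)\quad\text{for all }(i,k)\in\mathcal{E},$$ with $\underline{\theta}_{ik}\in[-\pi,0]$, $\overline{\theta}_{ik}\in[0,\pi]$. Consider the OPF problem with load vector $\mathbf{p}_D=(P_{D_1},\dots,P_{D_n})$: minimize $\sum_{i\in\mathcal{V}}f_i(P_{G_i})$ subject to $\underline{P}_{G_i}\le P_{G_i}\le\overline{P}_{G_i}$ and $P_{G_i}-P_{D_i}=\sum_{k\sim i}P_{ik}$ for $i\in\mathcal{V}$, and $(P_{ik},P_{ki})\in\mathcal{F}_{\theta_{ik}}$ for $(i,k)\in\mathcal{E}$, where each $f_i$ is monotonically increasing and convex. Let $f^*_{\boldsymbol\epsilon}$ be its optimal value when $\mathbf{p}_D$ is replaced by $\mathbf{p}_D+\boldsymbol\epsilon$, assume $f^*_{\boldsymbol\epsilon}$ is differentiable at $\boldsymbol\epsilon=0$, and let $\lambda_1,\dots,\lambda_n$ be the locational marginal prices, i.e. the numbers such that $\sum_i\lambda_i\epsilon_i$ is the first-order approximation of $f^*_{\boldsymbol\epsilon}-f^*_0$. Then for every $i\in\mathcal{V}$: (1) $\lambda_i$ equals the Lagrange multiplier of the power balance equation $P_{G_i}-P_{D_i}=\sum_{k\sim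 i}P_{ik}$ in the convexified OPF problem (the same problem with each constraint $(P_{ik},P_{ki})\in\mathcal{F}_{\theta_{ik}}$ replaced by $(P_{ik},P_{ki})\in\mathrm{conv}(\mathcal{F}_{\theta_{ik}})$); (2) $\lambda_i\ge0$.
   Context: Each line $(i,k)\in\mathcal{E}$ has admittance $y_{ik}=g_{ik}-jb_{ik}$ with $g_{ik},b_{ik}\ge0$. For $\theta_{ik}=\theta_i-\theta_k$ (difference of bus voltage phases), the line flows are $P_{ik}=\overline{V}_i^2 g_{ik}+\overline{V}_i\overline{V}_k b_{ik}\sin\theta_{ik}-\overline{V}_i\overline{V}_k g_{ik}\cos\theta_{ik}$ and $P_{ki}=\overline{V}_k^2 g_{ik}-\overline{V}_i\overline{V}_k b_{ik}\sin\theta_{ik}-\overline{V}_i\overline{V}_k g_{ik}\cos\theta_{ik}$. $\mathcal{F}_{\theta_{ik}}\subset\mathbb{R}^2$ is the set of pairs $(P_{ik},P_{ki})$ obtained as $\theta_{ik}$ ranges over $[\underline{\theta}_{ik},\overline{\theta}_{ik}]$. $P_{G_i}$ denotes the generation and $P_{D_i}$ the load at bus $i$; $\mathrm{conv}$ denotes convex hull. *)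

theory Defs
  imports "HOL-Analysis.Analysis"
begin

text \<open>Lines are given as a set E of ordered pairs (i,k); each line is listed once
  (no self loops, not both orientations). Neighbourhood and tree structure refer to
  the underlying undirected graph.\<close>

definition adj :: "('v \<times> 'v) set \<Rightarrow> 'v \<Rightarrow> 'v \<Rightarrow> bool" where
  "adj E a b \<longleftrightarrow> (a, b) \<in> E \<or> (b, a) \<in> E"

definition nbrs :: "('v \<times> 'v) set \<Rightarrow> 'v \<Rightarrow> 'v set" where
  "nbrs E i = {k. adj E i k}"

definition simple_edges :: "('v \<times> 'v) set \<Rightarrow> bool" where
  "simple_edges E \<longleftrightarrow> (\<forall>(i, k) \<in> E. i \<noteq> k \<and> (k, i) \<notin> E)"

definition graph_connected :: "('v \<times> 'v) set \<Rightarrow> bool" where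
  "graph_connected E \<longleftrightarrow> (\<forall>a b. (a, b) \<in> {(x, y). adj E x y}\<^sup>*)"

definition has_cycle :: "('v \<times> 'v) set \<Rightarrow> bool" where
  "has_cycle E \<longleftrightarrow> (\<exists>vs. length vs \<ge> 3 \<and> distinct vs \<and>
      (\<forall>j < length vs. adj E (vs ! j) (vs ! ((j + 1) mod length vs))))"

definition is_tree :: "('v \<times> 'v) set \<Rightarrow> bool" where
  "is_tree E \<longleftrightarrow> simple_edges E \<and> graph_connected E \<and> \<not> has_cycle E"

definition P_ik :: "real \<Rightarrow> real \<Rightarrow> real \<Rightarrow> real \<Rightarrow> real \<Rightarrow> real" where
  "P_ik Vi Vk g b \<theta> = Vi\<^sup>2 * g + Vi * Vk * b * sin \<theta> - Vi * Vk * g * cos \<theta>"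

definition P_ki :: "real \<Rightarrow> real \<Rightarrow> real \<Rightarrow> real \<Rightarrow> real \<Rightarrow> real" where
  "P_ki Vi Vk g b \<theta> = Vk\<^sup>2 * g - Vi * Vk * b * sin \<theta> - Vi * Vk * g * cos \<theta>"

definition flow_set ::
  "('v \<Rightarrow> real) \<Rightarrow> ('v \<times> 'v \<Rightarrow> real) \<Rightarrow> ('v \<times> 'v \<Rightarrow> real) \<Rightarrow>
   ('v \<times> 'v \<Rightarrow> real) \<Rightarrow> ('v \<times> 'v \<Rightarrow> real) \<Rightarrow> 'v \<times> 'v \<Rightarrow> (real \<times> real) set" where
  "flow_set Vb g b tlo thi e =
     (case e of (i, k) \<Rightarrow>
       (\<lambda>\<theta>. (P_ik (Vb i) (Vb k) (g e) (b e) \<theta>, P_ki (Vb i) (Vb k) (g e) (b e) \<theta>))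
         ` {tlo e .. thi e})"

text \<open>tan^-1(b/g), with the convention tan^-1(b/0) = pi/2 (b \<ge> 0).\<close>
definition angle_bound :: "real \<Rightarrow> real \<Rightarrow> real" where
  "angle_bound g b = (if g = 0 then pi / 2 else arctan (b / g))"

text \<open>Feasibility with load vector pd and line regions Reg (Reg = flow_set for the
  original OPF, its convex hull for the convexified OPF). pg = generation,
  fl i k = P_ik.\<close>
definition opf_feasible ::
  "('v::finite \<times> 'v) set \<Rightarrow> ('v \<times> 'v \<Rightarrow> (real \<times> real) set) \<Rightarrow> ('v \<Rightarrow> real) \<Rightarrow>
   ('v \<Rightarrow> real) \<Rightarrow> ('v \<Rightarrow> real) \<Rightarrow> ('v \<Rightarrow> real) \<Rightarrow> ('v \<Rightarrow> 'v \<Rightarrow> real) \<Rightarrow> bool" where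
  "opf_feasible E Reg Plo Phi pd pg fl \<longleftrightarrow>
     (\<forall>i. Plo i \<le> pg i \<and> pg i \<le> Phi i) \<and>
     (\<forall>i. pg i - pd i = (\<Sum>k\<in>nbrs E i. fl i k)) \<and>
     (\<forall>(i, k) \<in> E. (fl i k, fl k i) \<in> Reg (i, k))"

definition opf_value ::
  "('v::finite \<times> 'v) set \<Rightarrow> ('v \<times> 'v \<Rightarrow> (real \<times> real) set) \<Rightarrow> ('v \<Rightarrow> real \<Rightarrow> real) \<Rightarrow>
   ('v \<Rightarrow> real) \<Rightarrow> ('v \<Rightarrow> real) \<Rightarrow> ('v \<Rightarrow> real) \<Rightarrow> real" where
  "opf_value E Reg f Plo Phi pd =
     Inf {(\<Sum>i\<in>UNIV. f i (pg i)) | pg fl. opf_feasible E Reg Plo Phi pd pg fl}"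

text \<open>mu is a Lagrange multiplier vector of the power balance constraints:
  the partial Lagrangian (balance constraints dualized, all other constraints kept)
  is bounded below by the optimal value on the remaining constraint set
  (equivalently, by weak duality, its infimum equals the optimal value).\<close>
definition balance_multiplier ::
  "('v::finite \<times> 'v) set \<Rightarrow> ('v \<times> 'v \<Rightarrow> (real \<times> real) set) \<Rightarrow> ('v \<Rightarrow> real \<Rightarrow> real) \<Rightarrow>
   ('v \<Rightarrow> real) \<Rightarrow> ('v \<Rightarrow> real) \<Rightarrow> ('v \<Rightarrow> real) \<Rightarrow> ('v \<Rightarrow> real) \<Rightarrow> bool" where
  "balance_multiplier E Reg f Plo Phi pd \<mu> \<longleftrightarrow>
     (\<forall>pg fl. (\<forall>i. Plo i \<le> pg i \<and> pg i \<le> Phi i) \<and>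
              (\<forall>(i, k) \<in> E. (fl i k, fl k i) \<in> Reg (i, k)) \<longrightarrow>
        opf_value E Reg f Plo Phi pd \<le>
          (\<Sum>i\<in>UNIV. f i (pg i)) - (\<Sum>i\<in>UNIV. \<mu> i * (pg i - pd i - (\<Sum>k\<in>nbrs E i. fl i k))))"

end

theory Submission
  imports Defs
begin

text \<open>Within the angle limits the flow curve \<open>\<theta> \<mapsto> (P\<^sub>i\<^sub>k, P\<^sub>k\<^sub>i)\<close> of a line is increasing in its first
  and decreasing in its second coordinate and lies on one side of each of its tangents, so every
  point of its convex hull dominates a point of the curve. Peeling off leaves, on a tree one can
  then choose angles realising any injections that lie between those of an original and of a
  convexified solution. Hence the convexified OPF is exact, and the optimal value is nondecreasing
  in the loads. The convexified value \<open>V\<close> is convex in the loads, lies below the original value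
  \<open>F\<close> and touches it at \<open>p\<^sub>D\<close>; as \<open>F\<close> is differentiable there, its gradient \<open>\<lambda>\<close> is a subgradient
  of \<open>V\<close>. The subgradients of \<open>V\<close> at \<open>p\<^sub>D\<close> are exactly the balance multipliers, and each of them
  is a linear minorant of \<open>F - F(p\<^sub>D)\<close> near \<open>p\<^sub>D\<close>, hence equals \<open>\<lambda>\<close>. Monotonicity of \<open>F\<close> gives
  \<open>\<lambda> \<ge> 0\<close>.\<close>

section \<open>Line flows\<close>

text \<open>Up to the factor \<open>Vi Vk\<close>, these are the derivatives of \<open>P_ik\<close> and \<open>- P_ki\<close> in \<open>\<theta>\<close>.\<close>
lemma flow_slopes_pos:
  fixes G B \<theta> :: real
  assumes "0 \<le> G" "0 \<le> B" "G \<noteq> 0 \<or> B \<noteq> 0" "\<bar>\<theta>\<bar> < angle_bound G B"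
  shows "0 < B * cos \<theta> + G * sin \<theta>" "0 < B * cos \<theta> - G * sin \<theta>"
proof -
  have "G * \<bar>sin \<theta>\<bar> < B * cos \<theta>"
  proof (cases "G = 0")
    case True
    then have "cos \<theta> > 0" using assms(4) by (intro cos_gt_zero_pi) (auto simp: angle_bound_def)
    then show ?thesis using True assms(2,3) by simp
  next
    case False
    then have "\<bar>\<theta>\<bar> < arctan (B / G)" using assms(4) by (simp add: angle_bound_def)
    moreover have "arctan (B / G) < pi / 2" by (rule arctan_ubound)
    ultimately have \<theta>: "\<bar>\<theta>\<bar> < pi / 2" "cos \<theta> > 0" by (auto intro: cos_gt_zero_pi)
    have "arctan (tan \<bar>\<theta>\<bar>) < arctan (B / G)"
      using arctan_tan[of "\<bar>\<theta>\<bar>"] \<theta> \<open>\<bar>\<theta>\<bar> < arctan (B / G)\<close> by simp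
    then have "tan \<bar>\<theta>\<bar> < B / G" by (simp add: arctan_less_iff)
    moreover have "sin \<bar>\<theta>\<bar> = \<bar>sin \<theta>\<bar>"
      using sin_ge_zero[of "\<bar>\<theta>\<bar>"] \<theta>(1) by (auto simp: abs_if)
    then have "tan \<bar>\<theta>\<bar> = \<bar>sin \<theta>\<bar> / cos \<theta>"
      by (simp add: tan_def)
    ultimately show ?thesis using \<theta> False assms(1) by (simp add: field_simps)
  qed
  then show "0 < B * cos \<theta> + G * sin \<theta>" "0 < B * cos \<theta> - G * sin \<theta>"
    using assms(1) abs_ge_self[of "sin \<theta>"] abs_ge_minus_self[of "sin \<theta>"]
      mult_left_mono[of "sin \<theta>" "\<bar>sin \<theta>\<bar>" G] mult_left_mono[of "- sin \<theta>" "\<bar>sin \<theta>\<bar>" G]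
    by auto
qed

lemma continuous_on_P_ik_P_ki:
  "continuous_on S (P_ik Vi Vk G B)" "continuous_on S (P_ki Vi Vk G B)"
  unfolding P_ik_def[abs_def] P_ki_def[abs_def] by (intro continuous_intros)+

lemma P_ik_mono_on_P_ki_antimono_on:
  fixes Vi Vk G B lo hi :: real
  assumes V: "0 < Vi" "0 < Vk" and GB: "0 \<le> G" "0 \<le> B"
    and range: "- angle_bound G B < lo" "hi < angle_bound G B"
  shows "mono_on {lo..hi} (P_ik Vi Vk G B)" "antimono_on {lo..hi} (P_ki Vi Vk G B)"
proof -
  have slopes: "0 \<le> B * cos x + G * sin x \<and> 0 \<le> B * cos x - G * sin x" if "x \<in> {lo..hi}" for x
  proof (cases "G = 0 \<and> B = 0")
    case False
    moreover have "\<bar>x\<bar> < angle_bound G B" using that range by auto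
    ultimately show ?thesis using flow_slopes_pos[OF GB] by (simp add: less_imp_le)
  qed simp
  have dP_ik: "(P_ik Vi Vk G B has_real_derivative Vi * Vk * (B * cos x + G * sin x)) (at x)" for x
    unfolding P_ik_def[abs_def] by (auto intro!: derivative_eq_intros simp: algebra_simps)
  have dP_ki: "(P_ki Vi Vk G B has_real_derivative - (Vi * Vk * (B * cos x - G * sin x))) (at x)" for x
    unfolding P_ki_def[abs_def] by (auto intro!: derivative_eq_intros simp: algebra_simps)
  show "mono_on {lo..hi} (P_ik Vi Vk G B)"
  proof (intro monotone_onI)
    fix s t assume st: "s \<in> {lo..hi}" "t \<in> {lo..hi}" "s \<le> t"
    show "P_ik Vi Vk G B s \<le> P_ik Vi Vk G B t"
    proof (rule DERIV_nonneg_imp_nondecreasing[OF \<open>s \<le> t\<close>])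
      fix x assume "s \<le> x" "x \<le> t"
      then show "\<exists>y. (P_ik Vi Vk G B has_real_derivative y) (at x) \<and> 0 \<le> y"
        using dP_ik slopes[of x] st V by (intro exI[of _ "Vi * Vk * (B * cos x + G * sin x)"]) auto
    qed
  qed
  show "antimono_on {lo..hi} (P_ki Vi Vk G B)"
  proof (intro monotone_onI)
    fix s t assume st: "s \<in> {lo..hi}" "t \<in> {lo..hi}" "s \<le> t"
    show "P_ki Vi Vk G B t \<le> P_ki Vi Vk G B s"
    proof (rule DERIV_nonpos_imp_nonincreasing[OF \<open>s \<le> t\<close>])
      fix x assume "s \<le> x" "x \<le> t"
      then show "\<exists>y. (P_ki Vi Vk G B has_real_derivative y) (at x) \<and> y \<le> 0"
        using dP_ki slopes[of x] st V by (intro exI[of _ "- (Vi * Vk * (B * cos x - G * sin x))"]) auto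
    qed
  qed
qed

text \<open>The vector \<open>(B cos \<theta>\<^sub>0 - G sin \<theta>\<^sub>0, B cos \<theta>\<^sub>0 + G sin \<theta>\<^sub>0)\<close> is normal to the flow curve at
  \<open>\<theta>\<^sub>0\<close>, and its pairing with a chord equals \<open>2 Vi Vk B G (1 - cos (\<theta> - \<theta>\<^sub>0))\<close>.\<close>
lemma flow_curve_supporting_line:
  fixes Vi Vk G B \<theta> \<theta>\<^sub>0 :: real
  assumes "0 < Vi" "0 < Vk" "0 \<le> G" "0 \<le> B"
  shows "0 \<le> (B * cos \<theta>\<^sub>0 - G * sin \<theta>\<^sub>0) * (P_ik Vi Vk G B \<theta> - P_ik Vi Vk G B \<theta>\<^sub>0)
            + (B * cos \<theta>\<^sub>0 + G * sin \<theta>\<^sub>0) * (P_ki Vi Vk G B \<theta> - P_ki Vi Vk G B \<theta>\<^sub>0)"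
proof -
  have "sin \<theta>\<^sub>0 ^ 2 + cos \<theta>\<^sub>0 ^ 2 = 1" by simp
  then have "(B * cos \<theta>\<^sub>0 - G * sin \<theta>\<^sub>0) * (P_ik Vi Vk G B \<theta> - P_ik Vi Vk G B \<theta>\<^sub>0)
            + (B * cos \<theta>\<^sub>0 + G * sin \<theta>\<^sub>0) * (P_ki Vi Vk G B \<theta> - P_ki Vi Vk G B \<theta>\<^sub>0)
           = 2 * Vi * Vk * B * G * (1 - cos (\<theta> - \<theta>\<^sub>0))"
    unfolding P_ik_def P_ki_def cos_diff by algebra
  then show ?thesis using assms by simp
qed

text \<open>The curve point with the same first coordinate as the chord point lies below it, by the
  supporting line at that curve point.\<close>
lemma flow_curve_below_chord:
  fixes Vi Vk G B lo hi :: real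
  assumes V: "0 < Vi" "0 < Vk" and GB: "0 \<le> G" "0 \<le> B"
    and range: "- angle_bound G B < lo" "hi < angle_bound G B"
    and t: "lo \<le> t\<^sub>1" "t\<^sub>1 \<le> t\<^sub>2" "t\<^sub>2 \<le> hi" and uv: "0 \<le> u" "0 \<le> v" "u + v = 1"
  shows "\<exists>t\<in>{lo..hi}. P_ik Vi Vk G B t \<le> u * P_ik Vi Vk G B t\<^sub>1 + v * P_ik Vi Vk G B t\<^sub>2
                    \<and> P_ki Vi Vk G B t \<le> u * P_ki Vi Vk G B t\<^sub>1 + v * P_ki Vi Vk G B t\<^sub>2"
proof (cases "G = 0 \<and> B = 0")
  case True
  then show ?thesis using t by (intro bexI[of _ t\<^sub>1]) (auto simp: P_ik_def P_ki_def)
next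
  case False
  let ?X = "P_ik Vi Vk G B" and ?Y = "P_ki Vi Vk G B"
  define x where "x = u * ?X t\<^sub>1 + v * ?X t\<^sub>2"
  define y where "y = u * ?Y t\<^sub>1 + v * ?Y t\<^sub>2"
  have "?X t\<^sub>1 \<le> ?X t\<^sub>2"
    using monotone_onD[OF P_ik_mono_on_P_ki_antimono_on(1)[OF V GB range]] t by auto
  moreover have "x - ?X t\<^sub>1 = v * (?X t\<^sub>2 - ?X t\<^sub>1)" "?X t\<^sub>2 - x = u * (?X t\<^sub>2 - ?X t\<^sub>1)"
    using uv(3) unfolding x_def by (simp_all add: algebra_simps flip: eq_diff_eq' distrib_right)
  ultimately have "?X t\<^sub>1 \<le> x" "x \<le> ?X t\<^sub>2"
    using uv by (metis diff_ge_0_iff_ge mult_nonneg_nonneg)+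
  moreover have "continuous_on {t\<^sub>1..t\<^sub>2} ?X" by (rule continuous_on_P_ik_P_ki)
  ultimately obtain t where t': "t\<^sub>1 \<le> t" "t \<le> t\<^sub>2" "?X t = x"
    using IVT'[of ?X t\<^sub>1 x t\<^sub>2] t by auto
  define Nx where "Nx = B * cos t - G * sin t"
  define Ny where "Ny = B * cos t + G * sin t"
  have "Ny > 0" unfolding Ny_def using flow_slopes_pos(1)[OF GB] False range t t' by auto
  have "0 \<le> u * (Nx * (?X t\<^sub>1 - ?X t) + Ny * (?Y t\<^sub>1 - ?Y t)) + v * (Nx * (?X t\<^sub>2 - ?X t) + Ny * (?Y t\<^sub>2 - ?Y t))"
    using flow_curve_supporting_line[OF V GB, of t t\<^sub>1] flow_curve_supporting_line[OF V GB, of t t\<^sub>2] uv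
    unfolding Nx_def Ny_def by (metis add_nonneg_nonneg mult_nonneg_nonneg)
  also have "\<dots> = Nx * (x - (u + v) * ?X t) + Ny * (y - (u + v) * ?Y t)"
    unfolding x_def y_def by (simp add: algebra_simps)
  also have "\<dots> = Ny * (y - ?Y t)" using uv t' by simp
  finally have "?Y t \<le> y" using \<open>Ny > 0\<close> by (simp add: zero_le_mult_iff)
  then show ?thesis using t t' unfolding x_def y_def by (intro bexI[of _ t]) auto
qed

lemma convex_hull_flow_curve_dominated:
  fixes Vi Vk G B lo hi :: real
  assumes V: "0 < Vi" "0 < Vk" and GB: "0 \<le> G" "0 \<le> B"
    and range: "- angle_bound G B < lo" "hi < angle_bound G B"
    and z: "z \<in> convex hull ((\<lambda>\<theta>. (P_ik Vi Vk G B \<theta>, P_ki Vi Vk G B \<theta>)) ` {lo..hi})"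
  shows "\<exists>\<theta>\<in>{lo..hi}. P_ik Vi Vk G B \<theta> \<le> fst z \<and> P_ki Vi Vk G B \<theta> \<le> snd z"
proof -
  define U where "U = {z. \<exists>\<theta>\<in>{lo..hi}. P_ik Vi Vk G B \<theta> \<le> fst z \<and> P_ki Vi Vk G B \<theta> \<le> snd z}"
  have "convex U"
    unfolding convex_def
  proof (intro ballI allI impI)
    fix z\<^sub>1 z\<^sub>2 :: "real \<times> real" and u v :: real
    assume "z\<^sub>1 \<in> U" "z\<^sub>2 \<in> U" and uv: "0 \<le> u" "0 \<le> v" "u + v = 1"
    then obtain t\<^sub>1 t\<^sub>2 where t: "t\<^sub>1 \<in> {lo..hi}" "t\<^sub>2 \<in> {lo..hi}"
      and dom: "P_ik Vi Vk G B t\<^sub>1 \<le> fst z\<^sub>1" "P_ki Vi Vk G B t\<^sub>1 \<le> snd z\<^sub>1"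
               "P_ik Vi Vk G B t\<^sub>2 \<le> fst z\<^sub>2" "P_ki Vi Vk G B t\<^sub>2 \<le> snd z\<^sub>2"
      unfolding U_def by blast
    obtain t where "t \<in> {lo..hi}"
      and "P_ik Vi Vk G B t \<le> u * P_ik Vi Vk G B t\<^sub>1 + v * P_ik Vi Vk G B t\<^sub>2"
      and "P_ki Vi Vk G B t \<le> u * P_ki Vi Vk G B t\<^sub>1 + v * P_ki Vi Vk G B t\<^sub>2"
      using flow_curve_below_chord[OF V GB range, of t\<^sub>1 t\<^sub>2 u v]
        flow_curve_below_chord[OF V GB range, of t\<^sub>2 t\<^sub>1 v u] t uv
      by (cases "t\<^sub>1 \<le> t\<^sub>2") (auto simp: add.commute)
    moreover have "u * P_ik Vi Vk G B t\<^sub>1 + v * P_ik Vi Vk G B t\<^sub>2 \<le> u * fst z\<^sub>1 + v * fst z\<^sub>2"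
      "u * P_ki Vi Vk G B t\<^sub>1 + v * P_ki Vi Vk G B t\<^sub>2 \<le> u * snd z\<^sub>1 + v * snd z\<^sub>2"
      using dom uv by (intro add_mono mult_left_mono; simp)+
    ultimately show "u *\<^sub>R z\<^sub>1 + v *\<^sub>R z\<^sub>2 \<in> U"
      unfolding U_def by (intro CollectI bexI[of _ t]) auto
  qed
  moreover have "(\<lambda>\<theta>. (P_ik Vi Vk G B \<theta>, P_ki Vi Vk G B \<theta>)) ` {lo..hi} \<subseteq> U"
    unfolding U_def by auto
  ultimately have "convex hull ((\<lambda>\<theta>. (P_ik Vi Vk G B \<theta>, P_ki Vi Vk G B \<theta>)) ` {lo..hi}) \<subseteq> U"
    by (simp add: hull_minimal)
  then show ?thesis using z unfolding U_def by auto
qed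

section \<open>Injections on forests\<close>

lemma has_cycle_mono: "has_cycle E' \<Longrightarrow> E' \<subseteq> E \<Longrightarrow> has_cycle E"
  unfolding has_cycle_def adj_def by blast

definition simple_path :: "('v \<times> 'v) set \<Rightarrow> 'v list \<Rightarrow> bool" where
  "simple_path E vs \<longleftrightarrow> distinct vs \<and> (\<forall>m. Suc m < length vs \<longrightarrow> adj E (vs ! m) (vs ! Suc m))"

lemma simple_path_length_le:
  fixes vs :: "'v::finite list"
  assumes "simple_path E vs"
  shows "length vs \<le> CARD('v)"
  using assms card_mono[of UNIV "set vs"] distinct_card[of vs] unfolding simple_path_def by simp

lemma simple_path_Cons:
  assumes "simple_path E vs" "vs \<noteq> []" "k \<notin> set vs" "adj E k (hd vs)"
  shows "simple_path E (k # vs)"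
  unfolding simple_path_def
proof (intro conjI allI impI)
  fix m assume "Suc m < length (k # vs)"
  then show "adj E ((k # vs) ! m) ((k # vs) ! Suc m)"
    using assms by (cases m) (auto simp: simple_path_def hd_conv_nth)
qed (use assms in \<open>auto simp: simple_path_def\<close>)

lemma simple_path_closes_cycle:
  assumes path: "simple_path E vs" and m: "2 \<le> m" "m < length vs" and closing: "adj E (vs ! m) (vs ! 0)"
  shows "has_cycle E"
  unfolding has_cycle_def
proof (intro exI[of _ "take (Suc m) vs"] conjI allI impI)
  fix n assume "n < length (take (Suc m) vs)"
  then show "adj E (take (Suc m) vs ! n) (take (Suc m) vs ! ((n + 1) mod length (take (Suc m) vs)))"
    using path m closing unfolding simple_path_def by (cases "n = m") auto
qed (use path m in \<open>auto simp: simple_path_def\<close>)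

text \<open>The first vertex of a longest simple path is a leaf: a neighbour off the path would
  extend it, a neighbour further along the path would close a cycle.\<close>
lemma acyclic_has_leaf:
  fixes E :: "('v::finite \<times> 'v) set"
  assumes simple: "simple_edges E" and acyclic: "\<not> has_cycle E" and "E \<noteq> {}"
  obtains j i where "nbrs E j = {i}"
proof -
  obtain x y where "(x, y) \<in> E" using \<open>E \<noteq> {}\<close> by auto
  moreover have "x \<noteq> y" using simple calculation unfolding simple_edges_def by auto
  ultimately have "simple_path E [x, y] \<and> 2 \<le> length [x, y]"
    unfolding simple_path_def adj_def by (auto simp: less_Suc_eq)
  moreover have "\<forall>ws. simple_path E ws \<and> 2 \<le> length ws \<longrightarrow> length ws < Suc CARD('v)"
    by (auto intro: le_imp_less_Suc simple_path_length_le)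
  ultimately obtain vs where vs: "simple_path E vs" "2 \<le> length vs"
    and longest: "\<And>ws. simple_path E ws \<and> 2 \<le> length ws \<Longrightarrow> length ws \<le> length vs"
    using ex_has_greatest_nat[of "\<lambda>vs. simple_path E vs \<and> 2 \<le> length vs" _ length] by blast
  define j where "j = vs ! 0"
  define w where "w = vs ! 1"
  have "adj E j w" using vs unfolding simple_path_def j_def w_def by simp
  moreover have "k = w" if "adj E j k" for k
  proof (rule ccontr)
    assume "k \<noteq> w"
    have "adj E k j" using \<open>adj E j k\<close> unfolding adj_def by auto
    have "k \<noteq> j" using simple \<open>adj E j k\<close> unfolding simple_edges_def adj_def by auto
    show False
    proof (cases "k \<in> set vs")
      case False
      have "vs \<noteq> []" using vs(2) by auto
      then have "hd vs = j" unfolding j_def by (rule hd_conv_nth)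
      then have "simple_path E (k # vs)"
        using simple_path_Cons[OF vs(1) \<open>vs \<noteq> []\<close> False] \<open>adj E k j\<close> by simp
      then show False using longest[of "k # vs"] vs(2) by simp
    next
      case True
      then obtain m where m: "m < length vs" "vs ! m = k" by (auto simp: in_set_conv_nth)
      have "m \<noteq> 0" "m \<noteq> 1" using m \<open>k \<noteq> j\<close> \<open>k \<noteq> w\<close> unfolding j_def w_def by metis+
      then have "has_cycle E"
        using simple_path_closes_cycle[OF vs(1) _ m(1)] m(2) \<open>adj E k j\<close> unfolding j_def by simp
      then show False using acyclic by blast
    qed
  qed
  ultimately have "nbrs E j = {w}" unfolding nbrs_def by blast
  then show ?thesis by (rule that)
qed

lemma level_band_image_interval:
  fixes p q :: "real \<Rightarrow> real"
  assumes cont: "continuous_on {l..u} p" "continuous_on {l..u} q"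
    and monotone: "mono_on {l..u} p \<or> antimono_on {l..u} p"
  obtains m M where "q ` {t \<in> {l..u}. p t \<in> {A..B}} = {m..M}"
proof -
  define I where "I = {t \<in> {l..u}. p t \<in> {A..B}}"
  have between: "min (p x) (p z) \<le> p y \<and> p y \<le> max (p x) (p z)"
    if "x \<in> {l..u}" "z \<in> {l..u}" "x \<le> y" "y \<le> z" for x y z
  proof -
    have "y \<in> {l..u}" using that by auto
    from monotone show ?thesis
    proof
      assume "mono_on {l..u} p"
      then have "p x \<le> p y" "p y \<le> p z"
        using that \<open>y \<in> {l..u}\<close> monotone_onD[of "{l..u}" "(\<le>)" "(\<le>)" p] by blast+
      then show ?thesis by linarith
    next
      assume "antimono_on {l..u} p"
      then have "p y \<le> p x" "p z \<le> p y"
        using that \<open>y \<in> {l..u}\<close> monotone_onD[of "{l..u}" "(\<le>)" "\<lambda>x y. y \<le> x" p] by blast+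
      then show ?thesis by linarith
    qed
  qed
  have "is_interval I"
    unfolding is_interval_1 I_def using between by fastforce
  moreover have "compact I"
    unfolding compact_eq_bounded_closed
  proof
    show "bounded I" by (rule bounded_subset[of "{l..u}"]) (auto simp: I_def)
    have "closed ({l..u} \<inter> p -` {A..B})" using continuous_closed_preimage[OF cont(1)] by simp
    moreover have "I = {l..u} \<inter> p -` {A..B}" unfolding I_def by auto
    ultimately show "closed I" by simp
  qed
  moreover have "continuous_on I q" using cont(2) by (rule continuous_on_subset) (auto simp: I_def)
  ultimately have "connected (q ` I) \<and> compact (q ` I)"
    using is_interval_connected_1 connected_continuous_image compact_continuous_image by blast
  then show ?thesis using that unfolding I_def by (auto simp only: connected_compact_interval_1)
qed

text \<open>The values of \<open>q\<close> on the band where \<open>p\<close> lies in \<open>[A, B]\<close> form an interval reaching down to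
  \<open>q t\<^sub>1\<close> and up to \<open>q t\<^sub>0\<close>: points where \<open>p\<close> is too small or too large lie on the side of the
  band where \<open>q\<close> is larger or smaller, respectively.\<close>
lemma band_image_interval:
  fixes p q :: "real \<Rightarrow> real"
  assumes cont: "continuous_on {l..u} p" "continuous_on {l..u} q"
    and opposite: "mono_on {l..u} p \<and> antimono_on {l..u} q \<or> antimono_on {l..u} p \<and> mono_on {l..u} q"
    and t: "t\<^sub>1 \<in> {l..u}" "t\<^sub>0 \<in> {l..u}" and "p t\<^sub>1 \<le> B" "A \<le> p t\<^sub>0" "A \<le> B"
  obtains m M where "m \<le> M" "m \<le> q t\<^sub>1" "q t\<^sub>0 \<le> M" "q ` {t \<in> {l..u}. p t \<in> {A..B}} = {m..M}"
proof -
  define I where "I = {t \<in> {l..u}. p t \<in> {A..B}}"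
  obtain m M where mM: "q ` I = {m..M}"
    using level_band_image_interval[OF cont] opposite unfolding I_def by blast
  have q_opposite: "q t \<le> q s" if "s \<in> {l..u}" "t \<in> {l..u}" "p s < p t" for s t
    using opposite
  proof (elim disjE conjE)
    assume "mono_on {l..u} p" "antimono_on {l..u} q"
    then show ?thesis using that monotone_onD[of "{l..u}" "(\<le>)" "(\<le>)" p t s]
      monotone_onD[of "{l..u}" "(\<le>)" "\<lambda>x y. y \<le> x" q s t] by fastforce
  next
    assume "antimono_on {l..u} p" "mono_on {l..u} q"
    then show ?thesis using that monotone_onD[of "{l..u}" "(\<le>)" "\<lambda>x y. y \<le> x" p s t]
      monotone_onD[of "{l..u}" "(\<le>)" "(\<le>)" q t s] by fastforce
  qed
  obtain x where "x \<in> I"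
  proof (cases "p t\<^sub>0 \<le> B")
    case False
    have "connected (p ` {l..u})" using cont(1) by (intro connected_continuous_image) auto
    moreover have "p t\<^sub>1 \<in> p ` {l..u}" "p t\<^sub>0 \<in> p ` {l..u}" using t by auto
    ultimately have "B \<in> p ` {l..u}"
      using False \<open>p t\<^sub>1 \<le> B\<close> unfolding connected_iff_interval by (meson less_imp_le not_le)
    then obtain x where "x \<in> {l..u}" "p x = B" by blast
    then show ?thesis using that[of x] \<open>A \<le> B\<close> unfolding I_def by simp
  qed (use that t \<open>A \<le> p t\<^sub>0\<close> I_def in auto)
  have in_mM: "m \<le> q y \<and> q y \<le> M" if "y \<in> I" for y
    using imageI[OF that, of q] unfolding mM by simp
  have "m \<le> q t\<^sub>1"
  proof (cases "t\<^sub>1 \<in> I")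
    case False
    then have "q x \<le> q t\<^sub>1" using \<open>x \<in> I\<close> t \<open>p t\<^sub>1 \<le> B\<close> q_opposite[of t\<^sub>1 x] unfolding I_def by auto
    then show ?thesis using in_mM[OF \<open>x \<in> I\<close>] by linarith
  qed (use in_mM in blast)
  moreover have "q t\<^sub>0 \<le> M"
  proof (cases "t\<^sub>0 \<in> I")
    case False
    then have "q t\<^sub>0 \<le> q x" using \<open>x \<in> I\<close> t \<open>A \<le> p t\<^sub>0\<close> q_opposite[of x t\<^sub>0] unfolding I_def by auto
    then show ?thesis using in_mM[OF \<open>x \<in> I\<close>] by linarith
  qed (use in_mM in blast)
  moreover have "m \<le> M" using in_mM[OF \<open>x \<in> I\<close>] by linarith
  ultimately show ?thesis using that mM unfolding I_def by blast
qed

text \<open>Line \<open>e\<close> carries the flows \<open>a e (\<theta> e)\<close> out of its first and \<open>c e (\<theta> e)\<close> out of its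
  second end point; \<open>line_flow E a c \<theta> x k\<close> is the flow from \<open>x\<close> into the line joining it to \<open>k\<close>.\<close>
definition line_flow ::
  "('v \<times> 'v) set \<Rightarrow> ('v \<times> 'v \<Rightarrow> real \<Rightarrow> real) \<Rightarrow> ('v \<times> 'v \<Rightarrow> real \<Rightarrow> real) \<Rightarrow>
   ('v \<times> 'v \<Rightarrow> real) \<Rightarrow> 'v \<Rightarrow> 'v \<Rightarrow> real" where
  "line_flow E a c \<theta> x k = (if (x, k) \<in> E then a (x, k) (\<theta> (x, k)) else c (k, x) (\<theta> (k, x)))"

definition injection ::
  "('v \<times> 'v) set \<Rightarrow> ('v \<times> 'v \<Rightarrow> real \<Rightarrow> real) \<Rightarrow> ('v \<times> 'v \<Rightarrow> real \<Rightarrow> real) \<Rightarrow>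
   ('v \<times> 'v \<Rightarrow> real) \<Rightarrow> 'v \<Rightarrow> real" where
  "injection E a c \<theta> x = (\<Sum>k\<in>nbrs E x. line_flow E a c \<theta> x k)"

lemma line_flow_nbr:
  assumes "k \<in> nbrs E x"
  shows "(x, k) \<in> E \<and> line_flow E a c \<theta> x k = a (x, k) (\<theta> (x, k))
       \<or> (k, x) \<in> E \<and> line_flow E a c \<theta> x k = c (k, x) (\<theta> (k, x))"
  using assms unfolding line_flow_def nbrs_def adj_def by auto

lemma injection_cong:
  assumes "\<forall>e\<in>E. \<theta> e = \<theta>' e"
  shows "injection E a c \<theta> x = injection E a c \<theta>' x"
  unfolding injection_def line_flow_def
  by (rule sum.cong) (use assms in \<open>auto simp: nbrs_def adj_def\<close>)

lemma injection_remove_edge: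
  fixes E :: "('v::finite \<times> 'v) set"
  assumes simple: "simple_edges E" and xy: "(x, y) \<in> E"
  shows "injection E a c \<theta> v = injection (E - {(x, y)}) a c \<theta> v
           + (if v = x then a (x, y) (\<theta> (x, y)) else if v = y then c (x, y) (\<theta> (x, y)) else 0)"
proof -
  let ?E' = "E - {(x, y)}"
  have "x \<noteq> y" "(y, x) \<notin> E" using simple xy unfolding simple_edges_def by auto
  have flow: "line_flow E a c \<theta> v k = line_flow ?E' a c \<theta> v k" if "k \<in> nbrs ?E' v" for k
    using that \<open>(y, x) \<notin> E\<close> unfolding line_flow_def nbrs_def adj_def by auto
  consider "v = x" | "v = y" | "v \<noteq> x" "v \<noteq> y" by blast
  then show ?thesis
  proof cases
    case 1
    then have "nbrs E v = insert y (nbrs ?E' v)" "y \<notin> nbrs ?E' v"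
      using xy \<open>(y, x) \<notin> E\<close> unfolding nbrs_def adj_def by auto
    then show ?thesis using 1 flow unfolding injection_def by (simp add: line_flow_def xy)
  next
    case 2
    then have "nbrs E v = insert x (nbrs ?E' v)" "x \<notin> nbrs ?E' v"
      using xy \<open>(y, x) \<notin> E\<close> unfolding nbrs_def adj_def by auto
    then show ?thesis using 2 \<open>x \<noteq> y\<close> \<open>(y, x) \<notin> E\<close> flow
      unfolding injection_def by (simp add: line_flow_def xy)
  next
    case 3
    then have "nbrs E v = nbrs ?E' v" unfolding nbrs_def adj_def by auto
    then show ?thesis using 3 flow unfolding injection_def by simp
  qed
qed

lemma injection_remove_leaf:
  fixes E :: "('v::finite \<times> 'v) set"
  assumes simple: "simple_edges E" and leaf: "nbrs E j = {i}" and e: "e \<in> E" "e = (j, i) \<or> e = (i, j)"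
    and p: "p = (if e = (j, i) then a e else c e)" and q: "q = (if e = (j, i) then c e else a e)"
  shows "injection E a c \<theta> x
           = injection (E - {e}) a c \<theta> x + (if x = j then p (\<theta> e) else if x = i then q (\<theta> e) else 0)"
    and "injection (E - {e}) a c \<theta> j = 0"
proof -
  have "i \<noteq> j" using simple e unfolding simple_edges_def by auto
  show "injection E a c \<theta> x
           = injection (E - {e}) a c \<theta> x + (if x = j then p (\<theta> e) else if x = i then q (\<theta> e) else 0)"
  proof (cases "e = (j, i)")
    case True
    then show ?thesis using injection_remove_edge[OF simple, of j i a c \<theta> x] e p q by simp
  next
    case False
    then have "e = (i, j)" using e by simp
    then show ?thesis using injection_remove_edge[OF simple, of i j a c \<theta> x] e p q \<open>i \<noteq> j\<close> by auto
  qed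
  have "(j, i) \<notin> E - {e}" "(i, j) \<notin> E - {e}" using e simple unfolding simple_edges_def by auto
  moreover have "k = i" if "adj E j k" for k using leaf that unfolding nbrs_def by auto
  ultimately have "nbrs (E - {e}) j = {}" unfolding nbrs_def adj_def by blast
  then show "injection (E - {e}) a c \<theta> j = 0" unfolding injection_def by simp
qed

text \<open>Induction step: the band lemma turns the constraints at the leaf \<open>j\<close> into an interval of
  admissible flows into its neighbour \<open>i\<close>, which shifts the bounds at \<open>i\<close> for the smaller forest.\<close>
lemma injection_between_add_leaf:
  fixes E :: "('v::finite \<times> 'v) set"
  assumes simple: "simple_edges E" and leaf: "nbrs E j = {i}" and e: "e \<in> E" "e = (j, i) \<or> e = (i, j)"
    and flows: "continuous_on {l e..u e} (a e)" "continuous_on {l e..u e} (c e)"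
      "mono_on {l e..u e} (a e)" "antimono_on {l e..u e} (c e)"
    and \<theta>: "\<theta>\<^sub>1 e \<in> {l e..u e}" "\<theta>\<^sub>0 e \<in> {l e..u e}"
    and bounds: "\<forall>x. injection E a c \<theta>\<^sub>1 x \<le> up x" "\<forall>x. lo x \<le> injection E a c \<theta>\<^sub>0 x" "\<forall>x. lo x \<le> up x"
    and reduced: "\<And>lo' up'. \<forall>x. injection (E - {e}) a c \<theta>\<^sub>1 x \<le> up' x \<Longrightarrow>
        \<forall>x. lo' x \<le> injection (E - {e}) a c \<theta>\<^sub>0 x \<Longrightarrow> \<forall>x. lo' x \<le> up' x \<Longrightarrow>
        \<exists>\<theta>. (\<forall>e'\<in>E - {e}. \<theta> e' \<in> {l e'..u e'}) \<and>
            (\<forall>x. lo' x \<le> injection (E - {e}) a c \<theta> x \<and> injection (E - {e}) a c \<theta> x \<le> up' x)"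
  shows "\<exists>\<theta>. (\<forall>e'\<in>E. \<theta> e' \<in> {l e'..u e'}) \<and>
            (\<forall>x. lo x \<le> injection E a c \<theta> x \<and> injection E a c \<theta> x \<le> up x)"
proof -
  let ?E' = "E - {e}"
  have "i \<noteq> j" using simple e unfolding simple_edges_def by auto
  define p where "p = (if e = (j, i) then a e else c e)"
  define q where "q = (if e = (j, i) then c e else a e)"
  note split = injection_remove_leaf(1)[where a = a and c = c, OF simple leaf e p_def q_def]
    and at_j = injection_remove_leaf(2)[where a = a and c = c, OF simple leaf e p_def q_def]
  have "injection E a c \<theta> j = p (\<theta> e)" for \<theta> using split[of \<theta> j] at_j[of \<theta>] by simp
  then have p_bounds: "p (\<theta>\<^sub>1 e) \<le> up j" "lo j \<le> p (\<theta>\<^sub>0 e)" using bounds(1,2) by metis+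
  have cont: "continuous_on {l e..u e} p" "continuous_on {l e..u e} q"
    using flows unfolding p_def q_def by auto
  have opposite: "mono_on {l e..u e} p \<and> antimono_on {l e..u e} q \<or> antimono_on {l e..u e} p \<and> mono_on {l e..u e} q"
    using flows unfolding p_def q_def by auto
  obtain m M where mM: "m \<le> M" "m \<le> q (\<theta>\<^sub>1 e)" "q (\<theta>\<^sub>0 e) \<le> M"
    and band: "q ` {t \<in> {l e..u e}. p t \<in> {lo j..up j}} = {m..M}"
    by (rule band_image_interval[OF cont opposite \<theta> p_bounds bounds(3)[rule_format]])
  define lo' where "lo' = lo(i := lo i - M, j := 0)"
  define up' where "up' = up(i := up i - m, j := 0)"
  have "injection ?E' a c \<theta>\<^sub>1 x \<le> up' x" "lo' x \<le> injection ?E' a c \<theta>\<^sub>0 x" "lo' x \<le> up' x" for x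
    using bounds[rule_format, of x] bounds(3)[rule_format, of i] split[of \<theta>\<^sub>1 x] split[of \<theta>\<^sub>0 x]
      at_j mM \<open>i \<noteq> j\<close>
    unfolding lo'_def up'_def by auto
  then obtain \<theta>' where \<theta>': "\<forall>e'\<in>?E'. \<theta>' e' \<in> {l e'..u e'}"
    and between': "\<forall>x. lo' x \<le> injection ?E' a c \<theta>' x \<and> injection ?E' a c \<theta>' x \<le> up' x"
    using reduced by blast
  define r where "r = injection ?E' a c \<theta>' i"
  have "lo i - M \<le> r" "r \<le> up i - m"
    using between'[rule_format, of i] \<open>i \<noteq> j\<close> unfolding r_def lo'_def up'_def by auto
  then have "max m (lo i - r) \<in> {m..M}" using mM by auto
  then obtain t where t: "t \<in> {l e..u e}" "p t \<in> {lo j..up j}" "q t = max m (lo i - r)"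
    unfolding band[symmetric] by auto
  define \<theta> where "\<theta> = \<theta>'(e := t)"
  have same: "injection ?E' a c \<theta> x = injection ?E' a c \<theta>' x" for x
    by (rule injection_cong) (simp add: \<theta>_def)
  show ?thesis
  proof (intro exI[of _ \<theta>] conjI ballI allI)
    show "\<theta> e' \<in> {l e'..u e'}" if "e' \<in> E" for e'
      using that \<theta>' t unfolding \<theta>_def by (cases "e' = e") auto
    fix x
    show "lo x \<le> injection E a c \<theta> x" "injection E a c \<theta> x \<le> up x"
      using split[of \<theta> x] same[of x] at_j[of \<theta>'] between'[rule_format, of x] t
        \<open>r \<le> up i - m\<close> bounds(3)[rule_format, of i] \<open>i \<noteq> j\<close>
      unfolding \<theta>_def r_def lo'_def up'_def by auto
  qed
qed

lemma forest_injection_between: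
  fixes E :: "('v::finite \<times> 'v) set"
  assumes "simple_edges E" "\<not> has_cycle E"
    and "\<forall>e\<in>E. continuous_on {l e..u e} (a e) \<and> continuous_on {l e..u e} (c e) \<and>
               mono_on {l e..u e} (a e) \<and> antimono_on {l e..u e} (c e)"
    and "\<forall>e\<in>E. \<theta>\<^sub>1 e \<in> {l e..u e}" "\<forall>e\<in>E. \<theta>\<^sub>0 e \<in> {l e..u e}"
    and "\<forall>x. injection E a c \<theta>\<^sub>1 x \<le> up x" "\<forall>x. lo x \<le> injection E a c \<theta>\<^sub>0 x" "\<forall>x. lo x \<le> up x"
  shows "\<exists>\<theta>. (\<forall>e\<in>E. \<theta> e \<in> {l e..u e}) \<and>
            (\<forall>x. lo x \<le> injection E a c \<theta> x \<and> injection E a c \<theta> x \<le> up x)"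
  using assms
proof (induction "card E" arbitrary: E lo up rule: less_induct)
  case less
  show ?case
  proof (cases "E = {}")
    case True
    then show ?thesis using less.prems(6,7) by (auto simp: injection_def nbrs_def adj_def)
  next
    case False
    obtain j i where leaf: "nbrs E j = {i}"
      using acyclic_has_leaf[OF less.prems(1,2) False] by blast
    define e where "e = (if (j, i) \<in> E then (j, i) else (i, j))"
    have e: "e \<in> E" "e = (j, i) \<or> e = (i, j)"
      using leaf unfolding e_def nbrs_def adj_def by auto
    have "card (E - {e}) < card E" using e by (intro card_Diff1_less) auto
    moreover have "simple_edges (E - {e})" using less.prems(1) unfolding simple_edges_def by auto
    moreover have "\<not> has_cycle (E - {e})" using less.prems(2) has_cycle_mono by blast
    ultimately have reduced: "\<exists>\<theta>. (\<forall>e'\<in>E - {e}. \<theta> e' \<in> {l e'..u e'}) \<and>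
        (\<forall>x. lo' x \<le> injection (E - {e}) a c \<theta> x \<and> injection (E - {e}) a c \<theta> x \<le> up' x)"
      if "\<forall>x. injection (E - {e}) a c \<theta>\<^sub>1 x \<le> up' x" "\<forall>x. lo' x \<le> injection (E - {e}) a c \<theta>\<^sub>0 x"
         "\<forall>x. lo' x \<le> up' x" for lo' up'
      using less.hyps[of "E - {e}"] less.prems(3-5) that by blast
    have "continuous_on {l e..u e} (a e)" "continuous_on {l e..u e} (c e)"
      "mono_on {l e..u e} (a e)" "antimono_on {l e..u e} (c e)"
      "\<theta>\<^sub>1 e \<in> {l e..u e}" "\<theta>\<^sub>0 e \<in> {l e..u e}"
      using less.prems(3-5) e(1) by auto
    then show ?thesis
      using injection_between_add_leaf[OF less.prems(1) leaf e] less.prems(6-8) reduced by blast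
  qed
qed

section \<open>Optimal values\<close>

lemma opf_value_le:
  fixes f :: "'v::finite \<Rightarrow> real \<Rightarrow> real"
  assumes mono: "\<forall>i. mono (f i)" and feasible: "opf_feasible E Reg Plo Phi d pg fl"
  shows "opf_value E Reg f Plo Phi d \<le> (\<Sum>i\<in>UNIV. f i (pg i))"
  unfolding opf_value_def
proof (rule cInf_lower)
  show "(\<Sum>i\<in>UNIV. f i (pg i)) \<in> {(\<Sum>i\<in>UNIV. f i (pg i)) | pg fl. opf_feasible E Reg Plo Phi d pg fl}"
    using feasible by blast
  show "bdd_below {(\<Sum>i\<in>UNIV. f i (pg i)) | pg fl. opf_feasible E Reg Plo Phi d pg fl}"
  proof (rule bdd_belowI)
    fix C assume "C \<in> {(\<Sum>i\<in>UNIV. f i (pg i)) | pg fl. opf_feasible E Reg Plo Phi d pg fl}"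
    then obtain pg fl where "C = (\<Sum>i\<in>UNIV. f i (pg i))" "opf_feasible E Reg Plo Phi d pg fl" by blast
    then show "(\<Sum>i\<in>UNIV. f i (Plo i)) \<le> C"
      using mono unfolding opf_feasible_def by (simp add: sum_mono monoD)
  qed
qed

lemma opf_value_ge:
  fixes f :: "'v::finite \<Rightarrow> real \<Rightarrow> real"
  assumes feasible: "opf_feasible E Reg Plo Phi d pg\<^sub>0 fl\<^sub>0"
    and lower: "\<And>pg fl. opf_feasible E Reg Plo Phi d pg fl \<Longrightarrow> C \<le> (\<Sum>i\<in>UNIV. f i (pg i))"
  shows "C \<le> opf_value E Reg f Plo Phi d"
  unfolding opf_value_def
proof (rule cInf_greatest)
  show "{(\<Sum>i\<in>UNIV. f i (pg i)) | pg fl. opf_feasible E Reg Plo Phi d pg fl} \<noteq> {}"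
    using feasible by blast
qed (use lower in blast)

lemma opf_value_approx:
  fixes f :: "'v::finite \<Rightarrow> real \<Rightarrow> real"
  assumes feasible: "opf_feasible E Reg Plo Phi d pg\<^sub>0 fl\<^sub>0" and "0 < \<delta>"
  obtains pg fl where "opf_feasible E Reg Plo Phi d pg fl"
    "(\<Sum>i\<in>UNIV. f i (pg i)) < opf_value E Reg f Plo Phi d + \<delta>"
proof -
  let ?C = "{(\<Sum>i\<in>UNIV. f i (pg i)) | pg fl. opf_feasible E Reg Plo Phi d pg fl}"
  have "?C \<noteq> {}" using feasible by blast
  then obtain C where "C \<in> ?C" "C < Inf ?C + \<delta>"
    using cInf_lessD[of ?C "Inf ?C + \<delta>"] \<open>0 < \<delta>\<close> by auto
  then show ?thesis using that unfolding opf_value_def by blast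
qed

lemma opf_feasible_mono_region:
  assumes "\<forall>e\<in>E. Reg e \<subseteq> Reg' e" "opf_feasible E Reg Plo Phi d pg fl"
  shows "opf_feasible E Reg' Plo Phi d pg fl"
  using assms unfolding opf_feasible_def by blast

lemma opf_value_antimono_region:
  fixes f :: "'v::finite \<Rightarrow> real \<Rightarrow> real"
  assumes mono: "\<forall>i. mono (f i)" and sub: "\<forall>e\<in>E. Reg e \<subseteq> Reg' e"
    and feasible: "opf_feasible E Reg Plo Phi d pg\<^sub>0 fl\<^sub>0"
  shows "opf_value E Reg' f Plo Phi d \<le> opf_value E Reg f Plo Phi d"
proof (rule opf_value_ge[OF feasible])
  fix pg fl assume "opf_feasible E Reg Plo Phi d pg fl"
  then show "opf_value E Reg' f Plo Phi d \<le> (\<Sum>i\<in>UNIV. f i (pg i))"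
    by (rule opf_value_le[OF mono opf_feasible_mono_region[OF sub]])
qed

lemma opf_feasible_convex_combination:
  assumes convex: "\<forall>e\<in>E. convex (Reg e)" and u: "0 \<le> u" "u \<le> 1"
    and feasible: "opf_feasible E Reg Plo Phi d\<^sub>1 pg\<^sub>1 fl\<^sub>1" "opf_feasible E Reg Plo Phi d\<^sub>2 pg\<^sub>2 fl\<^sub>2"
  shows "opf_feasible E Reg Plo Phi (\<lambda>i. (1 - u) * d\<^sub>1 i + u * d\<^sub>2 i)
           (\<lambda>i. (1 - u) * pg\<^sub>1 i + u * pg\<^sub>2 i) (\<lambda>i k. (1 - u) * fl\<^sub>1 i k + u * fl\<^sub>2 i k)"
  unfolding opf_feasible_def
proof (intro conjI allI ballI)
  fix i
  have "Plo i \<le> pg\<^sub>1 i" "pg\<^sub>1 i \<le> Phi i" "Plo i \<le> pg\<^sub>2 i" "pg\<^sub>2 i \<le> Phi i"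
    and balance: "pg\<^sub>1 i - d\<^sub>1 i = (\<Sum>k\<in>nbrs E i. fl\<^sub>1 i k)" "pg\<^sub>2 i - d\<^sub>2 i = (\<Sum>k\<in>nbrs E i. fl\<^sub>2 i k)"
    using feasible unfolding opf_feasible_def by auto
  then show "Plo i \<le> (1 - u) * pg\<^sub>1 i + u * pg\<^sub>2 i" "(1 - u) * pg\<^sub>1 i + u * pg\<^sub>2 i \<le> Phi i"
    using u convex_bound_le[of "pg\<^sub>1 i" "Phi i" "pg\<^sub>2 i" "1 - u" u]
      convex_bound_le[of "- pg\<^sub>1 i" "- Plo i" "- pg\<^sub>2 i" "1 - u" u] by auto
  have "(\<Sum>k\<in>nbrs E i. (1 - u) * fl\<^sub>1 i k + u * fl\<^sub>2 i k)
      = (1 - u) * (\<Sum>k\<in>nbrs E i. fl\<^sub>1 i k) + u * (\<Sum>k\<in>nbrs E i. fl\<^sub>2 i k)"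
    by (simp add: sum.distrib sum_distrib_left)
  also have "\<dots> = (1 - u) * pg\<^sub>1 i + u * pg\<^sub>2 i - ((1 - u) * d\<^sub>1 i + u * d\<^sub>2 i)"
    unfolding balance[symmetric] by (simp add: algebra_simps)
  finally show "(1 - u) * pg\<^sub>1 i + u * pg\<^sub>2 i - ((1 - u) * d\<^sub>1 i + u * d\<^sub>2 i)
      = (\<Sum>k\<in>nbrs E i. (1 - u) * fl\<^sub>1 i k + u * fl\<^sub>2 i k)" ..
next
  fix e assume "e \<in> E"
  moreover obtain i k where e: "e = (i, k)" by fastforce
  ultimately have "(fl\<^sub>1 i k, fl\<^sub>1 k i) \<in> Reg (i, k)" "(fl\<^sub>2 i k, fl\<^sub>2 k i) \<in> Reg (i, k)" "convex (Reg (i, k))"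
    using feasible convex unfolding opf_feasible_def by auto
  then have "(1 - u) *\<^sub>R (fl\<^sub>1 i k, fl\<^sub>1 k i) + u *\<^sub>R (fl\<^sub>2 i k, fl\<^sub>2 k i) \<in> Reg (i, k)"
    using u unfolding convex_alt by blast
  then show "case e of (i, k) \<Rightarrow> ((1 - u) * fl\<^sub>1 i k + u * fl\<^sub>2 i k, (1 - u) * fl\<^sub>1 k i + u * fl\<^sub>2 k i) \<in> Reg (i, k)"
    unfolding e by simp
qed

lemma opf_value_convex_combination:
  fixes f :: "'v::finite \<Rightarrow> real \<Rightarrow> real"
  assumes convex: "\<forall>e\<in>E. convex (Reg e)" and f_convex: "\<forall>i. convex_on UNIV (f i)"
    and mono: "\<forall>i. mono (f i)" and u: "0 \<le> u" "u \<le> 1"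
    and feasible: "opf_feasible E Reg Plo Phi d\<^sub>1 pg\<^sub>1 fl\<^sub>1" "opf_feasible E Reg Plo Phi d\<^sub>2 pg\<^sub>2 fl\<^sub>2"
  shows "opf_value E Reg f Plo Phi (\<lambda>i. (1 - u) * d\<^sub>1 i + u * d\<^sub>2 i)
           \<le> (1 - u) * opf_value E Reg f Plo Phi d\<^sub>1 + u * opf_value E Reg f Plo Phi d\<^sub>2"
proof (rule field_le_epsilon)
  fix \<delta> :: real assume "0 < \<delta>"
  let ?V = "opf_value E Reg f Plo Phi"
  obtain pg\<^sub>1' fl\<^sub>1' where feasible\<^sub>1: "opf_feasible E Reg Plo Phi d\<^sub>1 pg\<^sub>1' fl\<^sub>1'"
    and cost\<^sub>1: "(\<Sum>i\<in>UNIV. f i (pg\<^sub>1' i)) < ?V d\<^sub>1 + \<delta>"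
    using opf_value_approx[OF feasible(1) \<open>0 < \<delta>\<close>] by blast
  obtain pg\<^sub>2' fl\<^sub>2' where feasible\<^sub>2: "opf_feasible E Reg Plo Phi d\<^sub>2 pg\<^sub>2' fl\<^sub>2'"
    and cost\<^sub>2: "(\<Sum>i\<in>UNIV. f i (pg\<^sub>2' i)) < ?V d\<^sub>2 + \<delta>"
    using opf_value_approx[OF feasible(2) \<open>0 < \<delta>\<close>] by blast
  have "?V (\<lambda>i. (1 - u) * d\<^sub>1 i + u * d\<^sub>2 i) \<le> (\<Sum>i\<in>UNIV. f i ((1 - u) * pg\<^sub>1' i + u * pg\<^sub>2' i))"
    by (rule opf_value_le[OF mono opf_feasible_convex_combination[OF convex u feasible\<^sub>1 feasible\<^sub>2]])
  also have "\<dots> \<le> (\<Sum>i\<in>UNIV. (1 - u) * f i (pg\<^sub>1' i) + u * f i (pg\<^sub>2' i))"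
    using convex_onD[OF f_convex[rule_format], of u] u by (intro sum_mono) simp
  also have "\<dots> = (1 - u) * (\<Sum>i\<in>UNIV. f i (pg\<^sub>1' i)) + u * (\<Sum>i\<in>UNIV. f i (pg\<^sub>2' i))"
    by (simp add: sum.distrib sum_distrib_left)
  also have "\<dots> \<le> (1 - u) * (?V d\<^sub>1 + \<delta>) + u * (?V d\<^sub>2 + \<delta>)"
    using cost\<^sub>1 cost\<^sub>2 u by (intro add_mono mult_left_mono) auto
  also have "\<dots> = (1 - u) * ?V d\<^sub>1 + u * ?V d\<^sub>2 + \<delta>"
    by (simp add: algebra_simps)
  finally show "?V (\<lambda>i. (1 - u) * d\<^sub>1 i + u * d\<^sub>2 i) \<le> (1 - u) * ?V d\<^sub>1 + u * ?V d\<^sub>2 + \<delta>" .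
qed

lemma convex_on_opf_value:
  fixes f :: "'v::finite \<Rightarrow> real \<Rightarrow> real" and pd :: "'v \<Rightarrow> real"
  assumes convex: "\<forall>e\<in>E. convex (Reg e)" and f_convex: "\<forall>i. convex_on UNIV (f i)"
    and mono: "\<forall>i. mono (f i)"
  shows "convex_on {\<epsilon>::real^'v. \<exists>pg fl. opf_feasible E Reg Plo Phi (\<lambda>i. pd i + \<epsilon> $ i) pg fl}
           (\<lambda>\<epsilon>. opf_value E Reg f Plo Phi (\<lambda>i. pd i + \<epsilon> $ i))"
proof (rule convex_onI)
  let ?S = "{\<epsilon>::real^'v. \<exists>pg fl. opf_feasible E Reg Plo Phi (\<lambda>i. pd i + \<epsilon> $ i) pg fl}"
  have load: "(\<lambda>i. (1 - u) * (pd i + x $ i) + u * (pd i + y $ i)) = (\<lambda>i. pd i + ((1 - u) *\<^sub>R x + u *\<^sub>R y) $ i)"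
    for u and x y :: "real^'v"
    by (simp add: algebra_simps)
  show "convex ?S"
    unfolding convex_alt
  proof (intro ballI allI impI)
    fix x y and u :: real assume "x \<in> ?S" "y \<in> ?S" "0 \<le> u \<and> u \<le> 1"
    then obtain pg\<^sub>1 fl\<^sub>1 pg\<^sub>2 fl\<^sub>2 where "opf_feasible E Reg Plo Phi (\<lambda>i. pd i + x $ i) pg\<^sub>1 fl\<^sub>1"
      "opf_feasible E Reg Plo Phi (\<lambda>i. pd i + y $ i) pg\<^sub>2 fl\<^sub>2" "0 \<le> u" "u \<le> 1"
      by blast
    from opf_feasible_convex_combination[OF convex this(3,4,1,2)]
    show "(1 - u) *\<^sub>R x + u *\<^sub>R y \<in> ?S" unfolding load by blast
  qed
  fix u :: real and x y assume "0 < u" "u < 1" "x \<in> ?S" "y \<in> ?S"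
  then show "opf_value E Reg f Plo Phi (\<lambda>i. pd i + ((1 - u) *\<^sub>R x + u *\<^sub>R y) $ i)
      \<le> (1 - u) * opf_value E Reg f Plo Phi (\<lambda>i. pd i + x $ i) + u * opf_value E Reg f Plo Phi (\<lambda>i. pd i + y $ i)"
    using opf_value_convex_combination[OF convex f_convex mono] unfolding load[symmetric] by force
qed

lemma balance_multiplierD:
  fixes f :: "'v::finite \<Rightarrow> real \<Rightarrow> real"
  assumes multiplier: "balance_multiplier E Reg f Plo Phi pd \<mu>"
    and feasible: "opf_feasible E Reg Plo Phi d pg\<^sub>0 fl\<^sub>0"
  shows "opf_value E Reg f Plo Phi pd + (\<Sum>i\<in>UNIV. \<mu> i * (d i - pd i)) \<le> opf_value E Reg f Plo Phi d"
proof (rule opf_value_ge[OF feasible])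
  fix pg fl assume "opf_feasible E Reg Plo Phi d pg fl"
  have "d i - pd i = pg i - pd i - (\<Sum>k\<in>nbrs E i. fl i k)" for i
  proof -
    have "pg i - d i = (\<Sum>k\<in>nbrs E i. fl i k)"
      using \<open>opf_feasible E Reg Plo Phi d pg fl\<close> unfolding opf_feasible_def by blast
    then show ?thesis by linarith
  qed
  then have "(\<Sum>i\<in>UNIV. \<mu> i * (d i - pd i)) = (\<Sum>i\<in>UNIV. \<mu> i * (pg i - pd i - (\<Sum>k\<in>nbrs E i. fl i k)))"
    by (simp only:)
  moreover have "opf_value E Reg f Plo Phi pd
      \<le> (\<Sum>i\<in>UNIV. f i (pg i)) - (\<Sum>i\<in>UNIV. \<mu> i * (pg i - pd i - (\<Sum>k\<in>nbrs E i. fl i k)))"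
    using multiplier \<open>opf_feasible E Reg Plo Phi d pg fl\<close>
    unfolding balance_multiplier_def opf_feasible_def by blast
  ultimately show "opf_value E Reg f Plo Phi pd + (\<Sum>i\<in>UNIV. \<mu> i * (d i - pd i)) \<le> (\<Sum>i\<in>UNIV. f i (pg i))"
    by linarith
qed

text \<open>Together with \<open>balance_multiplierD\<close>: the balance multipliers are exactly the subgradients of
  the optimal value as a function of the loads.\<close>
lemma balance_multiplierI:
  fixes f :: "'v::finite \<Rightarrow> real \<Rightarrow> real"
  assumes mono: "\<forall>i. mono (f i)"
    and subgradient: "\<And>d pg fl. opf_feasible E Reg Plo Phi d pg fl \<Longrightarrow>
       opf_value E Reg f Plo Phi pd + (\<Sum>i\<in>UNIV. \<mu> i * (d i - pd i)) \<le> opf_value E Reg f Plo Phi d"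
  shows "balance_multiplier E Reg f Plo Phi pd \<mu>"
  unfolding balance_multiplier_def
proof (intro allI impI)
  fix pg fl assume "(\<forall>i. Plo i \<le> pg i \<and> pg i \<le> Phi i) \<and> (\<forall>(i, k)\<in>E. (fl i k, fl k i) \<in> Reg (i, k))"
  moreover define d where "d i = pg i - (\<Sum>k\<in>nbrs E i. fl i k)" for i
  ultimately have feasible: "opf_feasible E Reg Plo Phi d pg fl"
    unfolding opf_feasible_def by simp
  have "(\<Sum>i\<in>UNIV. \<mu> i * (pg i - pd i - (\<Sum>k\<in>nbrs E i. fl i k))) = (\<Sum>i\<in>UNIV. \<mu> i * (d i - pd i))"
    unfolding d_def by (simp add: algebra_simps)
  then have "opf_value E Reg f Plo Phi pd + (\<Sum>i\<in>UNIV. \<mu> i * (pg i - pd i - (\<Sum>k\<in>nbrs E i. fl i k)))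
      \<le> opf_value E Reg f Plo Phi d"
    using subgradient[OF feasible] by simp
  also have "\<dots> \<le> (\<Sum>i\<in>UNIV. f i (pg i))" by (rule opf_value_le[OF mono feasible])
  finally show "opf_value E Reg f Plo Phi pd
      \<le> (\<Sum>i\<in>UNIV. f i (pg i)) - (\<Sum>i\<in>UNIV. \<mu> i * (pg i - pd i - (\<Sum>k\<in>nbrs E i. fl i k)))"
    by simp
qed

section \<open>Exactness of the convexification\<close>

definition tail_flow ::
  "('v \<Rightarrow> real) \<Rightarrow> ('v \<times> 'v \<Rightarrow> real) \<Rightarrow> ('v \<times> 'v \<Rightarrow> real) \<Rightarrow> 'v \<times> 'v \<Rightarrow> real \<Rightarrow> real" where
  "tail_flow Vb g b e = P_ik (Vb (fst e)) (Vb (snd e)) (g e) (b e)"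

definition head_flow ::
  "('v \<Rightarrow> real) \<Rightarrow> ('v \<times> 'v \<Rightarrow> real) \<Rightarrow> ('v \<times> 'v \<Rightarrow> real) \<Rightarrow> 'v \<times> 'v \<Rightarrow> real \<Rightarrow> real" where
  "head_flow Vb g b e = P_ki (Vb (fst e)) (Vb (snd e)) (g e) (b e)"

lemma flow_set_eq:
  "flow_set Vb g b tlo thi e = (\<lambda>\<theta>. (tail_flow Vb g b e \<theta>, head_flow Vb g b e \<theta>)) ` {tlo e..thi e}"
  by (cases e) (simp add: flow_set_def tail_flow_def head_flow_def)

lemma flow_set_angles:
  assumes "\<forall>(i, k)\<in>E. (fl i k, fl k i) \<in> flow_set Vb g b tlo thi (i, k)"
  obtains \<theta> where "\<forall>e\<in>E. \<theta> e \<in> {tlo e..thi e}"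
    "\<And>x. injection E (tail_flow Vb g b) (head_flow Vb g b) \<theta> x = (\<Sum>k\<in>nbrs E x. fl x k)"
proof -
  have "\<forall>e\<in>E. \<exists>\<theta>\<in>{tlo e..thi e}.
      fl (fst e) (snd e) = tail_flow Vb g b e \<theta> \<and> fl (snd e) (fst e) = head_flow Vb g b e \<theta>"
    using assms unfolding flow_set_eq by fastforce
  then obtain \<theta> where \<theta>: "\<forall>e\<in>E. \<theta> e \<in> {tlo e..thi e} \<and>
      fl (fst e) (snd e) = tail_flow Vb g b e (\<theta> e) \<and> fl (snd e) (fst e) = head_flow Vb g b e (\<theta> e)"
    by metis
  have "line_flow E (tail_flow Vb g b) (head_flow Vb g b) \<theta> x k = fl x k" if "k \<in> nbrs E x" for x k
    using line_flow_nbr[OF that, of "tail_flow Vb g b" "head_flow Vb g b" \<theta>]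
      \<theta>[rule_format, of "(x, k)"] \<theta>[rule_format, of "(k, x)"] by auto
  then have "injection E (tail_flow Vb g b) (head_flow Vb g b) \<theta> x = (\<Sum>k\<in>nbrs E x. fl x k)" for x
    unfolding injection_def by (rule sum.cong[OF refl])
  then show ?thesis using that \<theta> by blast
qed

lemma convex_hull_flow_set_angles:
  assumes Vpos: "\<forall>i. 0 < Vb i" and gb: "\<forall>e\<in>E. 0 \<le> g e \<and> 0 \<le> b e"
    and angles: "\<forall>e\<in>E. - angle_bound (g e) (b e) < tlo e \<and> thi e < angle_bound (g e) (b e)"
    and region: "\<forall>(i, k)\<in>E. (fl i k, fl k i) \<in> convex hull flow_set Vb g b tlo thi (i, k)"
  obtains \<theta> where "\<forall>e\<in>E. \<theta> e \<in> {tlo e..thi e}"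
    "\<And>x. injection E (tail_flow Vb g b) (head_flow Vb g b) \<theta> x \<le> (\<Sum>k\<in>nbrs E x. fl x k)"
proof -
  have "\<exists>\<theta>\<in>{tlo e..thi e}.
      tail_flow Vb g b e \<theta> \<le> fl (fst e) (snd e) \<and> head_flow Vb g b e \<theta> \<le> fl (snd e) (fst e)"
    if "e \<in> E" for e
  proof -
    have "(fl (fst e) (snd e), fl (snd e) (fst e)) \<in>
        convex hull ((\<lambda>\<theta>. (tail_flow Vb g b e \<theta>, head_flow Vb g b e \<theta>)) ` {tlo e..thi e})"
      using region that unfolding flow_set_eq by fastforce
    then show ?thesis
      using convex_hull_flow_curve_dominated Vpos gb[rule_format, OF that] angles[rule_format, OF that]
      unfolding tail_flow_def head_flow_def by auto
  qed
  then obtain \<theta> where \<theta>: "\<forall>e\<in>E. \<theta> e \<in> {tlo e..thi e} \<and>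
      tail_flow Vb g b e (\<theta> e) \<le> fl (fst e) (snd e) \<and> head_flow Vb g b e (\<theta> e) \<le> fl (snd e) (fst e)"
    by metis
  have "line_flow E (tail_flow Vb g b) (head_flow Vb g b) \<theta> x k \<le> fl x k" if "k \<in> nbrs E x" for x k
    using line_flow_nbr[OF that, of "tail_flow Vb g b" "head_flow Vb g b" \<theta>]
      \<theta>[rule_format, of "(x, k)"] \<theta>[rule_format, of "(k, x)"] by auto
  then have "injection E (tail_flow Vb g b) (head_flow Vb g b) \<theta> x \<le> (\<Sum>k\<in>nbrs E x. fl x k)" for x
    unfolding injection_def by (rule sum_mono)
  then show ?thesis using that \<theta> by blast
qed

lemma opf_feasible_line_flow:
  assumes simple: "simple_edges E" and \<theta>: "\<forall>e\<in>E. \<theta> e \<in> {tlo e..thi e}"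
    and box: "\<forall>i. Plo i \<le> pg i \<and> pg i \<le> Phi i"
    and balance: "\<forall>i. pg i - pd i = injection E (tail_flow Vb g b) (head_flow Vb g b) \<theta> i"
  shows "opf_feasible E (flow_set Vb g b tlo thi) Plo Phi pd pg
           (line_flow E (tail_flow Vb g b) (head_flow Vb g b) \<theta>)"
  unfolding opf_feasible_def
proof (intro conjI ballI)
  fix e assume "e \<in> E"
  moreover obtain i k where e: "e = (i, k)" by fastforce
  ultimately have "(i, k) \<in> E" "(k, i) \<notin> E" using simple unfolding simple_edges_def by auto
  then show "case e of (i, k) \<Rightarrow> (line_flow E (tail_flow Vb g b) (head_flow Vb g b) \<theta> i k,
      line_flow E (tail_flow Vb g b) (head_flow Vb g b) \<theta> k i) \<in> flow_set Vb g b tlo thi (i, k)"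
    using \<theta> unfolding e flow_set_eq line_flow_def by auto
qed (use box balance in \<open>simp_all add: injection_def\<close>)

text \<open>The angles of the original solution give injections above the lower generation limits,
  curve points dominated by the convexified flows give injections below the convexified generation,
  and \<open>forest_injection_between\<close> interpolates.\<close>
lemma convexified_dispatch_dominated:
  fixes E :: "('v::finite \<times> 'v) set"
  assumes forest: "simple_edges E" "\<not> has_cycle E"
    and Vpos: "\<forall>i. 0 < Vb i" and gb: "\<forall>e\<in>E. 0 \<le> g e \<and> 0 \<le> b e"
    and angles: "\<forall>e\<in>E. - angle_bound (g e) (b e) < tlo e \<and> tlo e \<le> thi e \<and> thi e < angle_bound (g e) (b e)"
    and feasible: "opf_feasible E (flow_set Vb g b tlo thi) Plo Phi pd pg\<^sub>0 fl\<^sub>0"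
    and box: "\<forall>i. Plo i \<le> pg\<^sub>1 i \<and> pg\<^sub>1 i \<le> Phi i"
    and region: "\<forall>(i, k)\<in>E. (fl\<^sub>1 i k, fl\<^sub>1 k i) \<in> convex hull flow_set Vb g b tlo thi (i, k)"
    and surplus: "\<forall>i. (\<Sum>k\<in>nbrs E i. fl\<^sub>1 i k) \<le> pg\<^sub>1 i - pd i"
  shows "\<exists>pg fl. opf_feasible E (flow_set Vb g b tlo thi) Plo Phi pd pg fl \<and> (\<forall>i. pg i \<le> pg\<^sub>1 i)"
proof -
  let ?a = "tail_flow Vb g b" and ?c = "head_flow Vb g b"
  have flows: "\<forall>e\<in>E. continuous_on {tlo e..thi e} (?a e) \<and> continuous_on {tlo e..thi e} (?c e) \<and>
               mono_on {tlo e..thi e} (?a e) \<and> antimono_on {tlo e..thi e} (?c e)"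
    using Vpos gb angles P_ik_mono_on_P_ki_antimono_on
    by (simp add: tail_flow_def head_flow_def continuous_on_P_ik_P_ki)
  obtain \<theta>\<^sub>0 where \<theta>\<^sub>0: "\<forall>e\<in>E. \<theta>\<^sub>0 e \<in> {tlo e..thi e}"
    and flow\<^sub>0: "\<And>x. injection E ?a ?c \<theta>\<^sub>0 x = (\<Sum>k\<in>nbrs E x. fl\<^sub>0 x k)"
    using flow_set_angles feasible unfolding opf_feasible_def by blast
  obtain \<theta>\<^sub>1 where \<theta>\<^sub>1: "\<forall>e\<in>E. \<theta>\<^sub>1 e \<in> {tlo e..thi e}"
    and flow\<^sub>1: "\<And>x. injection E ?a ?c \<theta>\<^sub>1 x \<le> (\<Sum>k\<in>nbrs E x. fl\<^sub>1 x k)"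
    using convex_hull_flow_set_angles[OF Vpos gb _ region] angles by blast
  have lower: "\<forall>x. Plo x - pd x \<le> injection E ?a ?c \<theta>\<^sub>0 x"
    using feasible flow\<^sub>0 unfolding opf_feasible_def by (metis diff_right_mono)
  have upper: "\<forall>x. injection E ?a ?c \<theta>\<^sub>1 x \<le> pg\<^sub>1 x - pd x"
    using flow\<^sub>1 surplus by (meson order_trans)
  have "\<forall>x. Plo x - pd x \<le> pg\<^sub>1 x - pd x" using box by auto
  then have "\<exists>\<theta>. (\<forall>e\<in>E. \<theta> e \<in> {tlo e..thi e}) \<and>
      (\<forall>x. Plo x - pd x \<le> injection E ?a ?c \<theta> x \<and> injection E ?a ?c \<theta> x \<le> pg\<^sub>1 x - pd x)"
    by (rule forest_injection_between[OF forest flows \<theta>\<^sub>1 \<theta>\<^sub>0 upper lower])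
  then obtain \<theta> where \<theta>: "\<forall>e\<in>E. \<theta> e \<in> {tlo e..thi e}"
    and between: "\<forall>x. Plo x - pd x \<le> injection E ?a ?c \<theta> x \<and> injection E ?a ?c \<theta> x \<le> pg\<^sub>1 x - pd x"
    by blast
  have dominated: "Plo x \<le> pd x + injection E ?a ?c \<theta> x" "pd x + injection E ?a ?c \<theta> x \<le> pg\<^sub>1 x" for x
    using between[rule_format, of x] by linarith+
  then have "\<forall>x. Plo x \<le> pd x + injection E ?a ?c \<theta> x \<and> pd x + injection E ?a ?c \<theta> x \<le> Phi x"
    using box by (meson order_trans)
  then have "opf_feasible E (flow_set Vb g b tlo thi) Plo Phi pd (\<lambda>x. pd x + injection E ?a ?c \<theta> x)
      (line_flow E ?a ?c \<theta>)"
    by (intro opf_feasible_line_flow[OF forest(1) \<theta>]) simp_all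
  with dominated(2) show ?thesis by blast
qed

lemma opf_value_le_convexified:
  fixes E :: "('v::finite \<times> 'v) set"
  assumes forest: "simple_edges E" "\<not> has_cycle E"
    and Vpos: "\<forall>i. 0 < Vb i" and gb: "\<forall>e\<in>E. 0 \<le> g e \<and> 0 \<le> b e"
    and angles: "\<forall>e\<in>E. - angle_bound (g e) (b e) < tlo e \<and> tlo e \<le> thi e \<and> thi e < angle_bound (g e) (b e)"
    and mono: "\<forall>i. mono (f i)"
    and feasible: "opf_feasible E (flow_set Vb g b tlo thi) Plo Phi pd pg\<^sub>0 fl\<^sub>0"
    and load: "\<forall>i. pd i \<le> d i"
    and feasible_d: "opf_feasible E (\<lambda>e. convex hull flow_set Vb g b tlo thi e) Plo Phi d pg\<^sub>1 fl\<^sub>1"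
  shows "opf_value E (flow_set Vb g b tlo thi) f Plo Phi pd
           \<le> opf_value E (\<lambda>e. convex hull flow_set Vb g b tlo thi e) f Plo Phi d"
proof (rule opf_value_ge[OF feasible_d])
  fix pg' fl' assume "opf_feasible E (\<lambda>e. convex hull flow_set Vb g b tlo thi e) Plo Phi d pg' fl'"
  then have "\<forall>i. Plo i \<le> pg' i \<and> pg' i \<le> Phi i"
    "\<forall>(i, k)\<in>E. (fl' i k, fl' k i) \<in> convex hull flow_set Vb g b tlo thi (i, k)"
    "\<forall>i. (\<Sum>k\<in>nbrs E i. fl' i k) \<le> pg' i - pd i"
    using load unfolding opf_feasible_def by (auto simp: algebra_simps)
  then obtain pg fl where "opf_feasible E (flow_set Vb g b tlo thi) Plo Phi pd pg fl" "\<forall>i. pg i \<le> pg' i"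
    using convexified_dispatch_dominated[OF forest Vpos gb angles feasible] by blast
  then have "opf_value E (flow_set Vb g b tlo thi) f Plo Phi pd \<le> (\<Sum>i\<in>UNIV. f i (pg i))"
    using opf_value_le[OF mono] by blast
  also have "\<dots> \<le> (\<Sum>i\<in>UNIV. f i (pg' i))"
    using mono \<open>\<forall>i. pg i \<le> pg' i\<close> by (simp add: sum_mono monoD)
  finally show "opf_value E (flow_set Vb g b tlo thi) f Plo Phi pd \<le> (\<Sum>i\<in>UNIV. f i (pg' i))" .
qed

lemma opf_value_mono_load:
  fixes E :: "('v::finite \<times> 'v) set"
  assumes forest: "simple_edges E" "\<not> has_cycle E"
    and Vpos: "\<forall>i. 0 < Vb i" and gb: "\<forall>e\<in>E. 0 \<le> g e \<and> 0 \<le> b e"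
    and angles: "\<forall>e\<in>E. - angle_bound (g e) (b e) < tlo e \<and> tlo e \<le> thi e \<and> thi e < angle_bound (g e) (b e)"
    and mono: "\<forall>i. mono (f i)"
    and feasible: "opf_feasible E (flow_set Vb g b tlo thi) Plo Phi pd pg\<^sub>0 fl\<^sub>0"
    and load: "\<forall>i. pd i \<le> d i"
    and feasible_d: "opf_feasible E (flow_set Vb g b tlo thi) Plo Phi d pg\<^sub>1 fl\<^sub>1"
  shows "opf_value E (flow_set Vb g b tlo thi) f Plo Phi pd \<le> opf_value E (flow_set Vb g b tlo thi) f Plo Phi d"
proof -
  have hull: "\<forall>e\<in>E. flow_set Vb g b tlo thi e \<subseteq> convex hull flow_set Vb g b tlo thi e"
    by (simp add: hull_subset)
  show ?thesis
    using opf_value_le_convexified[OF forest Vpos gb angles mono feasible load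
        opf_feasible_mono_region[OF hull feasible_d]]
      opf_value_antimono_region[OF mono hull feasible_d] by linarith
qed

section \<open>Sensitivity of the optimal value\<close>

lemma has_derivative_at_0_lower_bound:
  fixes F :: "'a::real_normed_vector \<Rightarrow> real"
  assumes deriv: "(F has_derivative L) (at 0)"
    and above: "\<forall>\<^sub>F t in at_right 0. F 0 + t * c \<le> F (t *\<^sub>R h)"
  shows "c \<le> L h"
proof -
  have "((\<lambda>t. F (t *\<^sub>R h)) has_derivative (\<lambda>t. L (t *\<^sub>R h))) (at 0)"
    using has_derivative_compose[of "\<lambda>t. t *\<^sub>R h" "\<lambda>t. t *\<^sub>R h" 0 UNIV F L] deriv
    by (simp add: bounded_linear_scaleR_left bounded_linear_imp_has_derivative)
  moreover have "(\<lambda>t. L (t *\<^sub>R h)) = (*) (L h)"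
    using linear_scale[OF has_derivative_linear[OF deriv]] by (simp add: fun_eq_iff mult.commute)
  ultimately have "((\<lambda>t. F (t *\<^sub>R h)) has_field_derivative L h) (at 0)"
    by (simp add: has_field_derivative_def)
  then have "((\<lambda>t. (F (t *\<^sub>R h) - F 0) / t) \<longlongrightarrow> L h) (at_right 0)"
    unfolding has_field_derivative_iff by (simp add: filterlim_at_split)
  moreover have "\<forall>\<^sub>F t in at_right 0. c \<le> (F (t *\<^sub>R h) - F 0) / t"
    using above eventually_at_right_less
    by eventually_elim (simp add: pos_le_divide_eq algebra_simps)
  ultimately show ?thesis
    by (rule tendsto_lowerbound[OF _ _ trivial_limit_at_right_real])
qed

lemma eventually_at_right_scaleR:
  fixes h :: "'a::real_normed_vector"
  assumes "\<forall>\<^sub>F \<epsilon> in nhds 0. P \<epsilon>"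
  shows "\<forall>\<^sub>F t in at_right 0. P (t *\<^sub>R h)"
proof -
  have "((\<lambda>t. t *\<^sub>R h) \<longlongrightarrow> 0) (at_right 0)"
    by (auto intro!: tendsto_eq_intros)
  then show ?thesis using assms unfolding filterlim_iff by blast
qed

lemma has_derivative_axis_nonneg:
  fixes F :: "real^'n \<Rightarrow> real"
  assumes deriv: "(F has_derivative L) (at 0)"
    and increasing: "\<forall>\<^sub>F \<epsilon> in nhds 0. (\<forall>i. 0 \<le> \<epsilon> $ i) \<longrightarrow> F 0 \<le> F \<epsilon>"
  shows "0 \<le> L (axis i 1)"
proof -
  have "\<forall>\<^sub>F t in at_right 0. F 0 + t * 0 \<le> F (t *\<^sub>R axis i 1)"
    using eventually_at_right_less[of 0] eventually_at_right_scaleR[OF increasing, of "axis i 1"]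
    by eventually_elim (simp add: axis_def)
  then show ?thesis by (rule has_derivative_at_0_lower_bound[OF deriv])
qed

text \<open>Compare \<open>V 0\<close> with the midpoint of \<open>V (t d)\<close> and \<open>V (-t d)\<close>, and bound these by the chord
  to \<open>d\<close> and by the majorant, respectively.\<close>
lemma convex_on_subgradient_of_majorant:
  fixes V F :: "'a::real_normed_vector \<Rightarrow> real"
  assumes convex: "convex_on S V" and "d \<in> S"
    and near: "\<forall>\<^sub>F \<epsilon> in nhds 0. \<epsilon> \<in> S \<and> V \<epsilon> \<le> F \<epsilon>"
    and touch: "V 0 = F 0" and deriv: "(F has_derivative L) (at 0)"
  shows "V 0 + L d \<le> V d"
proof -
  have "0 \<in> S" using eventually_nhds_x_imp_x[OF near] by simp
  have "convex S" using convex unfolding convex_on_def by blast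
  have "\<forall>\<^sub>F t in at_right (0::real). t < 1"
    unfolding eventually_at_right_field by (intro exI[of _ 1]) auto
  then have "\<forall>\<^sub>F t in at_right 0. (0 < t \<and> t < 1) \<and> t *\<^sub>R (- d) \<in> S \<and> V (t *\<^sub>R (- d)) \<le> F (t *\<^sub>R (- d))"
    using eventually_at_right_less[of 0] eventually_at_right_scaleR[OF near, of "- d"]
    by eventually_elim blast
  then have "\<forall>\<^sub>F t in at_right 0. F 0 + t * (V 0 - V d) \<le> F (t *\<^sub>R (- d))"
  proof eventually_elim
    case (elim t)
    then have "t *\<^sub>R d \<in> S"
      using convexD_alt[OF \<open>convex S\<close> \<open>0 \<in> S\<close> \<open>d \<in> S\<close>, of t] by simp
    have "V (t *\<^sub>R d) \<le> (1 - t) * V 0 + t * V d"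
      using convex_onD[OF convex, of t 0 d] elim \<open>0 \<in> S\<close> \<open>d \<in> S\<close> by simp
    moreover have "V 0 \<le> (1 - 1/2) * V (t *\<^sub>R d) + 1/2 * V (t *\<^sub>R (- d))"
      using convex_onD[OF convex, of "1/2" "t *\<^sub>R d" "t *\<^sub>R (- d)"] elim \<open>t *\<^sub>R d \<in> S\<close> by simp
    ultimately show ?case using elim touch by (simp add: algebra_simps)
  qed
  then have "V 0 - V d \<le> L (- d)" by (rule has_derivative_at_0_lower_bound[OF deriv])
  then show ?thesis using linear_neg[OF has_derivative_linear[OF deriv]] by simp
qed

lemma balance_multiplier_of_differentiable_majorant:
  fixes f :: "'v::finite \<Rightarrow> real \<Rightarrow> real" and F :: "real^'v \<Rightarrow> real"
  assumes convex: "\<forall>e\<in>E. convex (Reg e)" and f_convex: "\<forall>i. convex_on UNIV (f i)"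
    and mono: "\<forall>i. mono (f i)"
    and deriv: "(F has_derivative (\<lambda>\<epsilon>. \<Sum>i\<in>UNIV. lam i * \<epsilon> $ i)) (at 0)"
    and touch: "opf_value E Reg f Plo Phi pd = F 0"
    and near: "\<forall>\<^sub>F \<epsilon> in nhds 0. (\<exists>pg fl. opf_feasible E Reg Plo Phi (\<lambda>i. pd i + \<epsilon> $ i) pg fl) \<and>
                 opf_value E Reg f Plo Phi (\<lambda>i. pd i + \<epsilon> $ i) \<le> F \<epsilon>"
  shows "balance_multiplier E Reg f Plo Phi pd lam"
proof (rule balance_multiplierI[OF mono])
  fix d pg fl assume "opf_feasible E Reg Plo Phi d pg fl"
  define \<epsilon> :: "real^'v" where "\<epsilon> = (\<chi> i. d i - pd i)"
  have d: "(\<lambda>i. pd i + \<epsilon> $ i) = d" by (simp add: \<epsilon>_def)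
  have "opf_value E Reg f Plo Phi (\<lambda>i. pd i + (0::real^'v) $ i) + (\<Sum>i\<in>UNIV. lam i * \<epsilon> $ i)
      \<le> opf_value E Reg f Plo Phi (\<lambda>i. pd i + \<epsilon> $ i)"
    using \<open>opf_feasible E Reg Plo Phi d pg fl\<close> near touch unfolding d[symmetric]
    by (intro convex_on_subgradient_of_majorant[OF convex_on_opf_value[OF convex f_convex mono] _ _ _ deriv])
      auto
  then show "opf_value E Reg f Plo Phi pd + (\<Sum>i\<in>UNIV. lam i * (d i - pd i)) \<le> opf_value E Reg f Plo Phi d"
    by (simp add: d) (simp add: \<epsilon>_def)
qed

lemma balance_multiplier_unique:
  fixes f :: "'v::finite \<Rightarrow> real \<Rightarrow> real" and F :: "real^'v \<Rightarrow> real"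
  assumes mono: "\<forall>i. mono (f i)"
    and deriv: "(F has_derivative (\<lambda>\<epsilon>. \<Sum>i\<in>UNIV. lam i * \<epsilon> $ i)) (at 0)"
    and touch: "opf_value E Reg f Plo Phi pd = F 0"
    and near: "\<forall>\<^sub>F \<epsilon> in nhds 0. (\<exists>pg fl. opf_feasible E Reg Plo Phi (\<lambda>i. pd i + \<epsilon> $ i) pg fl) \<and>
                 opf_value E Reg f Plo Phi (\<lambda>i. pd i + \<epsilon> $ i) \<le> F \<epsilon>"
    and multiplier: "balance_multiplier E Reg f Plo Phi pd \<mu>"
  shows "\<mu> = lam"
proof -
  have le: "(\<Sum>i\<in>UNIV. \<mu> i * h $ i) \<le> (\<Sum>i\<in>UNIV. lam i * h $ i)" for h :: "real^'v"
  proof (rule has_derivative_at_0_lower_bound[OF deriv])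
    show "\<forall>\<^sub>F t in at_right 0. F 0 + t * (\<Sum>i\<in>UNIV. \<mu> i * h $ i) \<le> F (t *\<^sub>R h)"
      using eventually_at_right_scaleR[OF near, of h]
    proof eventually_elim
      case (elim t)
      then have "opf_value E Reg f Plo Phi pd + (\<Sum>i\<in>UNIV. \<mu> i * (t * h $ i))
          \<le> opf_value E Reg f Plo Phi (\<lambda>i. pd i + t * h $ i)"
        using balance_multiplierD[OF multiplier] by fastforce
      then show ?case using elim touch by (simp add: sum_distrib_left algebra_simps)
    qed
  qed
  show "\<mu> = lam"
  proof
    fix i
    show "\<mu> i = lam i"
      using le[of "axis i 1"] le[of "axis i (-1)"] by (simp add: axis_def if_distrib cong: if_cong)
  qed
qed

theorem theorem2:
  fixes E :: "('v::finite \<times> 'v) set"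
    and Vb :: "'v \<Rightarrow> real"
    and g b tlo thi :: "'v \<times> 'v \<Rightarrow> real"
    and f :: "'v \<Rightarrow> real \<Rightarrow> real"
    and Plo Phi pd :: "'v \<Rightarrow> real"
    and lam :: "'v \<Rightarrow> real"
  assumes tree: "is_tree E"
    and Vpos: "\<forall>i. Vb i > 0"
    and gb_nonneg: "\<forall>e\<in>E. g e \<ge> 0 \<and> b e \<ge> 0"
    and angles: "\<forall>e\<in>E. - angle_bound (g e) (b e) < tlo e \<and> tlo e \<le> thi e
                        \<and> thi e < angle_bound (g e) (b e)"
    and angle_ranges: "\<forall>e\<in>E. - pi \<le> tlo e \<and> tlo e \<le> 0 \<and> 0 \<le> thi e \<and> thi e \<le> pi"
    and f_mono: "\<forall>i. mono (f i)"
    and f_convex: "\<forall>i. convex_on UNIV (f i)"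
    and feasible_near0: "\<exists>r>0. \<forall>\<epsilon>::real^'v. norm \<epsilon> < r \<longrightarrow>
          (\<exists>pg fl. opf_feasible E (flow_set Vb g b tlo thi) Plo Phi (\<lambda>i. pd i + \<epsilon> $ i) pg fl)"
    and LMP: "((\<lambda>\<epsilon>::real^'v. opf_value E (flow_set Vb g b tlo thi) f Plo Phi (\<lambda>i. pd i + \<epsilon> $ i))
                has_derivative (\<lambda>\<epsilon>. \<Sum>i\<in>UNIV. lam i * \<epsilon> $ i)) (at 0)"
  shows "balance_multiplier E (\<lambda>e. convex hull (flow_set Vb g b tlo thi e)) f Plo Phi pd lam
       \<and> (\<forall>\<mu>. balance_multiplier E (\<lambda>e. convex hull (flow_set Vb g b tlo thi e)) f Plo Phi pd \<mu>
              \<longrightarrow> \<mu> = lam)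
       \<and> (\<forall>i. lam i \<ge> 0)"
proof -
  define FS where "FS = flow_set Vb g b tlo thi"
  define CH where "CH = (\<lambda>e. convex hull FS e)"
  define F where "F \<epsilon> = opf_value E FS f Plo Phi (\<lambda>i. pd i + \<epsilon> $ i)" for \<epsilon> :: "real^'v"
  have forest: "simple_edges E" "\<not> has_cycle E" using tree unfolding is_tree_def by auto
  have relax: "\<forall>e\<in>E. FS e \<subseteq> CH e" and convex: "\<forall>e\<in>E. convex (CH e)"
    unfolding CH_def by (simp_all add: hull_subset)
  have feasible: "\<forall>\<^sub>F \<epsilon> in nhds 0. \<exists>pg fl. opf_feasible E FS Plo Phi (\<lambda>i. pd i + \<epsilon> $ i) pg fl"
    using feasible_near0 unfolding FS_def eventually_nhds_metric dist_norm by auto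
  then obtain pg\<^sub>0 fl\<^sub>0 where feasible\<^sub>0: "opf_feasible E FS Plo Phi pd pg\<^sub>0 fl\<^sub>0"
    using eventually_nhds_x_imp_x by fastforce
  have touch: "opf_value E CH f Plo Phi pd = F 0"
    using opf_value_antimono_region[OF f_mono relax feasible\<^sub>0]
      opf_value_le_convexified[OF forest Vpos gb_nonneg angles f_mono feasible\<^sub>0[unfolded FS_def] _
        opf_feasible_mono_region[OF relax feasible\<^sub>0, unfolded CH_def FS_def]]
    unfolding F_def CH_def FS_def by simp
  have near: "\<forall>\<^sub>F \<epsilon> in nhds 0. (\<exists>pg fl. opf_feasible E CH Plo Phi (\<lambda>i. pd i + \<epsilon> $ i) pg fl) \<and>
      opf_value E CH f Plo Phi (\<lambda>i. pd i + \<epsilon> $ i) \<le> F \<epsilon>"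
    using feasible unfolding F_def
    by eventually_elim (metis opf_feasible_mono_region[OF relax] opf_value_antimono_region[OF f_mono relax])
  have deriv: "(F has_derivative (\<lambda>\<epsilon>. \<Sum>i\<in>UNIV. lam i * \<epsilon> $ i)) (at 0)"
    using LMP unfolding F_def FS_def .
  have "\<forall>\<^sub>F \<epsilon> in nhds 0. (\<forall>i. 0 \<le> \<epsilon> $ i) \<longrightarrow> F 0 \<le> F \<epsilon>"
    using feasible unfolding F_def FS_def
    by eventually_elim
      (use opf_value_mono_load[OF forest Vpos gb_nonneg angles f_mono feasible\<^sub>0[unfolded FS_def]] in auto)
  then have "0 \<le> lam i" for i
    using has_derivative_axis_nonneg[OF deriv] by (simp add: axis_def if_distrib cong: if_cong)
  then show ?thesis
    using balance_multiplier_of_differentiable_majorant[OF convex f_convex f_mono deriv touch near]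
      balance_multiplier_unique[OF f_mono deriv touch near]
    unfolding CH_def FS_def by blast
qed

end
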